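(* Let $1\le R\le\lambda$, let $\sigma\in[R^{-1/2},1]$ be dyadic, let $\tau\subset S^1$ be an arc of aperture $\sigma^{-1}R^{-1/2}$, fix $(x,t)$ and fix $\tilde\omega\in\Theta_{\sigma,\tau}$. Then for any arcs $\theta_1,\theta_2\subset\tau$ (of aperture $R^{-1/2}$, identified with their centers), $$\Big|\tilde\omega\cdot\frac{\partial(u^\lambda_{\theta_1}(x,t),t)}{\partial(x,t)}-\tilde\omega\cdot\frac{\partial(u^\lambda_{\theta_2}(x,t),t)}{\partial(x,t)}\Big|\lesssim R^{-1}.$$
   Context: $\phi\in C^\infty(\mathbb R^3\times(\mathbb R^2\setminus\{0\}))$, $(x,t,\eta)\in\mathbb R^2\times\mathbb R\times\mathbb R^2$, is real-valued and homogeneous of degree 1 in $\eta$, with $\operatorname{rank}\partial^2_{x\eta}\phi=2$ on the relevant region and with derivatives $\partial^\alpha_\eta\partial^\beta_{x,t}\phi$ bounded by $1$ on $B_{\varepsilon_0}(0)\times B_{\varepsilon_0}((0,1))$ for $|\alpha|,|\beta|\le M$ ($M$ large). For a unit vector $\theta\in S^1$, $u_\theta(x,t):=\nabla_\eta\phi(x,t,\theta)$ and $u^\lambda_\theta(x,t)=\lambda u_\theta(x/\lambda,t/\lambda)$; $\frac{\partial(u^\lambda_\theta(x,t),t)}{\partial(x,t)}$ is the $3\times3$ Jacobian matrix of $(x,t)\mapsto(u^\lambda_\theta(x,t),t)$ and $\tilde\omega$ acts as a row vector. $\Theta_{\sigma,\tau}\subset\mathbb R^3$ is the rectangular box centered at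 the origin with side lengths $\sigma^2$ in direction $(\tau,0)$, $\sigma R^{-1/2}$ in direction $(\tau^\perp,0)$ and $R^{-1}$ in direction $(0,0,1)$, where $\tau$ also denotes the center of the arc. The implicit constant depends only on the derivative bounds of $\phi$. *)

theory Defs
  imports "HOL-Analysis.Analysis"
begin

text \<open>Iterated directional (Frechet) derivatives: the list v # vs means
  first differentiate along the directions vs, then along v.\<close>
primrec dderiv :: "'a::real_normed_vector list \<Rightarrow> ('a \<Rightarrow> real) \<Rightarrow> 'a \<Rightarrow> real" where
  "dderiv [] f = f"
| "dderiv (v # vs) f = (\<lambda>p. frechet_derivative (dderiv vs f) (at p) v)"

definition phiP :: "(real^2 \<Rightarrow> real \<Rightarrow> real^2 \<Rightarrow> real) \<Rightarrow> ((real^2) \<times> real) \<times> (real^2) \<Rightarrow> real" where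
  "phiP \<phi> p = \<phi> (fst (fst p)) (snd (fst p)) (snd p)"

text \<open>C^infinity on R^3 x (R^2 - {0}): derivatives of all orders exist there.\<close>
definition smooth_phase :: "(real^2 \<Rightarrow> real \<Rightarrow> real^2 \<Rightarrow> real) \<Rightarrow> bool" where
  "smooth_phase \<phi> \<longleftrightarrow>
     (\<forall>vs p. snd p \<noteq> 0 \<longrightarrow> dderiv vs (phiP \<phi>) differentiable (at p))"

definition homog1 :: "(real^2 \<Rightarrow> real \<Rightarrow> real^2 \<Rightarrow> real) \<Rightarrow> bool" where
  "homog1 \<phi> \<longleftrightarrow> (\<forall>x t \<eta> s. \<eta> \<noteq> 0 \<longrightarrow> s > 0 \<longrightarrow> \<phi> x t (s *\<^sub>R \<eta>) = s * \<phi> x t \<eta>)"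

definition e2 :: "real^2" where "e2 = vector [0, 1]"

definition region :: "real \<Rightarrow> (((real^2) \<times> real) \<times> (real^2)) set" where
  "region \<epsilon>0 = ball 0 \<epsilon>0 \<times> ball e2 \<epsilon>0"

text \<open>A coordinate
  direction with zero eta-part is an (x,t)-direction, one with zero
  (x,t)-part is an eta-direction.\<close>
definition deriv_bounds :: "nat \<Rightarrow> real \<Rightarrow> (real^2 \<Rightarrow> real \<Rightarrow> real^2 \<Rightarrow> real) \<Rightarrow> bool" where
  "deriv_bounds M \<epsilon>0 \<phi> \<longleftrightarrow>
     (\<forall>vs p. vs \<in> lists Basis
        \<and> length (filter (\<lambda>v. snd v = 0) vs) \<le> M
        \<and> length (filter (\<lambda>v. fst v = 0) vs) \<le> M
        \<and> p \<in> region \<epsilon>0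
        \<longrightarrow> \<bar>dderiv vs (phiP \<phi>) p\<bar> \<le> 1)"

definition mixed_hessian :: "(real^2 \<Rightarrow> real \<Rightarrow> real^2 \<Rightarrow> real) \<Rightarrow> ((real^2) \<times> real) \<times> (real^2) \<Rightarrow> real^2^2" where
  "mixed_hessian \<phi> p =
     (\<chi> i j. dderiv [(0, axis j 1), ((axis i 1, 0), 0)] (phiP \<phi>) p)"

definition rank_condition :: "real \<Rightarrow> (real^2 \<Rightarrow> real \<Rightarrow> real^2 \<Rightarrow> real) \<Rightarrow> bool" where
  "rank_condition \<epsilon>0 \<phi> \<longleftrightarrow> (\<forall>p \<in> region \<epsilon>0. rank (mixed_hessian \<phi> p) = 2)"

definition u :: "(real^2 \<Rightarrow> real \<Rightarrow> real^2 \<Rightarrow> real) \<Rightarrow> real^2 \<Rightarrow> real^2 \<Rightarrow> real \<Rightarrow> real^2" where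
  "u \<phi> \<theta> x t = (\<chi> j. frechet_derivative (\<phi> x t) (at \<theta>) (axis j 1))"

definition u_lam :: "(real^2 \<Rightarrow> real \<Rightarrow> real^2 \<Rightarrow> real) \<Rightarrow> real \<Rightarrow> real^2 \<Rightarrow> real^2 \<Rightarrow> real \<Rightarrow> real^2" where
  "u_lam \<phi> lam \<theta> x t = lam *\<^sub>R u \<phi> \<theta> ((1 / lam) *\<^sub>R x) (t / lam)"

definition xt_of :: "real^3 \<Rightarrow> (real^2) \<times> real" where
  "xt_of y = (vector [y $ 1, y $ 2], y $ 3)"

definition Fmap :: "(real^2 \<Rightarrow> real \<Rightarrow> real^2 \<Rightarrow> real) \<Rightarrow> real \<Rightarrow> real^2 \<Rightarrow> real^3 \<Rightarrow> real^3" where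
  "Fmap \<phi> lam \<theta> y =
     (let U = u_lam \<phi> lam \<theta> (fst (xt_of y)) (snd (xt_of y)) in vector [U $ 1, U $ 2, y $ 3])"

definition Jac :: "(real^2 \<Rightarrow> real \<Rightarrow> real^2 \<Rightarrow> real) \<Rightarrow> real \<Rightarrow> real^2 \<Rightarrow> real^3 \<Rightarrow> real^3^3" where
  "Jac \<phi> lam \<theta> y = matrix (frechet_derivative (Fmap \<phi> lam \<theta>) (at y))"

text \<open>Closed arc of S^1 with center c (a unit vector) and aperture (angular length) a.\<close>
definition arc :: "real^2 \<Rightarrow> real \<Rightarrow> (real^2) set" where
  "arc c a = {v. norm v = 1 \<and> arccos (v \<bullet> c) \<le> a / 2}"

definition perp :: "real^2 \<Rightarrow> real^2" where
  "perp v = vector [- (v $ 2), v $ 1]"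

definition Theta :: "real \<Rightarrow> real \<Rightarrow> real^2 \<Rightarrow> (real^3) set" where
  "Theta R \<sigma> \<tau> = {vector [a * \<tau> $ 1 + b * perp \<tau> $ 1, a * \<tau> $ 2 + b * perp \<tau> $ 2, c] | a b c.
       \<bar>a\<bar> \<le> \<sigma>^2 / 2 \<and> \<bar>b\<bar> \<le> \<sigma> * R powr (-1/2) / 2 \<and> \<bar>c\<bar> \<le> R powr (-1) / 2}"

definition dyadic :: "real \<Rightarrow> bool" where
  "dyadic \<sigma> \<longleftrightarrow> (\<exists>k::int. \<sigma> = 2 powr (real_of_int k))"

end

theory Submission
  imports Defs
begin

text \<open>The Jacobian of (x,t) |-> (u^lam_theta(x,t), t) has rows d_{x,t} grad_eta phi(z, theta),
  z = (x,t)/lam, plus the constant row (0,0,1); so the difference of the two contracted rows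
  is w' . Delta, where w' = a tau + b tau^perp is the spatial part of w, with |a| <= sigma^2/2
  and |b| <= sigma R^{-1/2}/2, and Delta = d_{x,t} grad_eta phi(z, theta1) - (same at theta2).
  Both theta_i lie on the arc of aperture A = sigma^{-1} R^{-1/2} around tau, so the mean value
  theorem gives |Delta| <= C A, which handles b.  For a one needs |tau . Delta| <= C A^2: since
  grad_eta phi is homogeneous of degree 0, eta . d_eta d_{x,t} grad_eta phi(z, eta) = 0 (Euler's
  identity, differentiated, together with the symmetry of mixed partials), so along the segment
  from theta2 to theta1 the vector tau acts only through tau - eta, which has size O(A).
  Altogether |w' . Delta| <= C (sigma^2 A^2 + sigma R^{-1/2} A) = 2C/R.\<close>

declare dderiv.simps(2) [simp del]

lemma has_real_derivative_along_line:
  fixes f :: "'a::real_normed_vector \<Rightarrow> real"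
  assumes "(f has_derivative f') (at (p + s *\<^sub>R v))"
  shows "((\<lambda>s. f (p + s *\<^sub>R v)) has_real_derivative f' v) (at s)"
proof -
  have "((\<lambda>s. p + s *\<^sub>R v) has_derivative (\<lambda>s. s *\<^sub>R v)) (at s)"
    by (auto intro!: derivative_eq_intros)
  from has_derivative_compose[OF this assms]
  have "((\<lambda>s. f (p + s *\<^sub>R v)) has_derivative (\<lambda>s. f' (s *\<^sub>R v))) (at s)" .
  moreover have "(\<lambda>s. f' (s *\<^sub>R v)) = (*) (f' v)"
    using linear_cmul[OF has_derivative_linear[OF assms]] by (auto simp: mult.commute)
  ultimately show ?thesis by (simp add: has_field_derivative_def)
qed

lemma dist_parallelogram_le:
  fixes q v w :: "'a::real_normed_vector"
  assumes "0 \<le> a" "a \<le> h" "0 \<le> b" "b \<le> h"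
  shows "dist (q + a *\<^sub>R v + b *\<^sub>R w) q \<le> h * (norm v + norm w)"
proof -
  have "dist (q + a *\<^sub>R v + b *\<^sub>R w) q \<le> a * norm v + b * norm w"
    using norm_triangle_ineq[of "a *\<^sub>R v" "b *\<^sub>R w"] assms by (simp add: dist_norm)
  also have "\<dots> \<le> h * norm v + h * norm w"
    using assms by (intro add_mono mult_right_mono) auto
  finally show ?thesis by (simp add: distrib_left)
qed

lemma second_difference_mean_value:
  fixes f :: "'a::real_normed_vector \<Rightarrow> real"
  assumes B: "ball q r \<subseteq> S" and h: "0 < h" "h * (norm v + norm w) < r"
    and d1: "\<And>p. p \<in> S \<Longrightarrow> (f has_derivative fD p) (at p)"
    and d2: "\<And>p. p \<in> S \<Longrightarrow> ((\<lambda>p. fD p v) has_derivative fDD p) (at p)"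
  shows "\<exists>q'. dist q' q \<le> h * (norm v + norm w) \<and>
     f (q + h *\<^sub>R v + h *\<^sub>R w) - f (q + h *\<^sub>R v) - f (q + h *\<^sub>R w) + f q = h\<^sup>2 * fDD q' w"
proof -
  have inS: "q + a *\<^sub>R v + b *\<^sub>R w \<in> S" if "0 \<le> a" "a \<le> h" "0 \<le> b" "b \<le> h" for a b
    using B dist_parallelogram_le[OF that, of q v w] h by (auto simp: dist_commute)
  define g where "g s = f (q + s *\<^sub>R v + h *\<^sub>R w) - f (q + s *\<^sub>R v)" for s
  have "(g has_real_derivative fD (q + s *\<^sub>R v + h *\<^sub>R w) v - fD (q + s *\<^sub>R v) v) (at s)"
    if "0 \<le> s" "s \<le> h" for s
  proof -
    have shift: "(q + h *\<^sub>R w) + s *\<^sub>R v = q + s *\<^sub>R v + h *\<^sub>R w" for s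
      by (simp add: algebra_simps)
    have "(f has_derivative fD (q + s *\<^sub>R v + h *\<^sub>R w)) (at ((q + h *\<^sub>R w) + s *\<^sub>R v))"
      unfolding shift using d1 inS[OF that, of h] h by simp
    from has_real_derivative_along_line[OF this]
    have "((\<lambda>s. f (q + s *\<^sub>R v + h *\<^sub>R w)) has_real_derivative fD (q + s *\<^sub>R v + h *\<^sub>R w) v) (at s)"
      unfolding shift .
    moreover have "((\<lambda>s. f (q + s *\<^sub>R v)) has_real_derivative fD (q + s *\<^sub>R v) v) (at s)"
      using has_real_derivative_along_line[OF d1, of q s v] inS[OF that, of 0] h by simp
    ultimately show ?thesis
      unfolding g_def by (rule DERIV_diff[THEN DERIV_cong]) (simp add: ac_simps)
  qed
  from MVT2[OF h(1) this] obtain \<xi> where \<xi>: "0 < \<xi>" "\<xi> < h"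
    "g h - g 0 = h * (fD (q + \<xi> *\<^sub>R v + h *\<^sub>R w) v - fD (q + \<xi> *\<^sub>R v) v)"
    by auto
  define k where "k t = fD (q + \<xi> *\<^sub>R v + t *\<^sub>R w) v" for t
  have "(k has_real_derivative fDD (q + \<xi> *\<^sub>R v + t *\<^sub>R w) w) (at t)" if "0 \<le> t" "t \<le> h" for t
    unfolding k_def
    using has_real_derivative_along_line[OF d2, of "q + \<xi> *\<^sub>R v" t w] inS[of \<xi> t] \<xi> that
    by simp
  from MVT2[OF h(1) this] obtain \<zeta> where \<zeta>: "0 < \<zeta>" "\<zeta> < h"
    "k h - k 0 = h * fDD (q + \<xi> *\<^sub>R v + \<zeta> *\<^sub>R w) w"
    by auto
  have "f (q + h *\<^sub>R v + h *\<^sub>R w) - f (q + h *\<^sub>R v) - f (q + h *\<^sub>R w) + f q = h * (k h - k 0)"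
    using \<xi>(3) by (simp add: g_def k_def)
  also have "\<dots> = h\<^sup>2 * fDD (q + \<xi> *\<^sub>R v + \<zeta> *\<^sub>R w) w"
    using \<zeta>(3) by (simp add: power2_eq_square)
  finally show ?thesis
    using dist_parallelogram_le[of \<xi> h \<zeta> q v w] \<xi> \<zeta> by force
qed

text \<open>Both orders of the second difference with step h equal h^2 times a mixed derivative
  taken at some point within distance O(h) of q; continuity at q identifies the two limits.\<close>
lemma second_derivative_symmetric:
  fixes f :: "'a::real_normed_vector \<Rightarrow> real"
  assumes S: "open S" "q \<in> S"
    and d1: "\<And>p. p \<in> S \<Longrightarrow> (f has_derivative fD p) (at p)"
    and dv: "\<And>p. p \<in> S \<Longrightarrow> ((\<lambda>p. fD p v) has_derivative fv p) (at p)"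
    and dw: "\<And>p. p \<in> S \<Longrightarrow> ((\<lambda>p. fD p w) has_derivative fw p) (at p)"
    and cv: "continuous (at q) (\<lambda>p. fv p w)" and cw: "continuous (at q) (\<lambda>p. fw p v)"
  shows "fv q w = fw q v"
proof (rule ccontr)
  assume "fv q w \<noteq> fw q v"
  then have e: "\<bar>fv q w - fw q v\<bar> / 2 > 0" by simp
  obtain \<delta>v where \<delta>v: "\<delta>v > 0" "\<And>p. dist p q < \<delta>v \<Longrightarrow> dist (fv p w) (fv q w) < \<bar>fv q w - fw q v\<bar> / 2"
    using cv e unfolding continuous_at_eps_delta by blast
  obtain \<delta>w where \<delta>w: "\<delta>w > 0" "\<And>p. dist p q < \<delta>w \<Longrightarrow> dist (fw p v) (fw q v) < \<bar>fv q w - fw q v\<bar> / 2"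
    using cw e unfolding continuous_at_eps_delta by blast
  obtain r where r: "r > 0" "ball q r \<subseteq> S" using S open_contains_ball by blast
  define m where "m = min r (min \<delta>v \<delta>w)"
  define N where "N = norm v + norm w + 1"
  define h where "h = m / (2 * N)"
  have N: "N > 0" by (simp add: N_def add_nonneg_pos)
  have m: "m > 0" "m \<le> r" "m \<le> \<delta>v" "m \<le> \<delta>w" using r \<delta>v \<delta>w by (auto simp: m_def)
  have h0: "h > 0" using m N by (simp add: h_def)
  have "h * (norm v + norm w) \<le> h * N" using h0 by (simp add: N_def)
  also have "\<dots> = m / 2" using N by (simp add: h_def)
  finally have h: "h > 0" "h * (norm v + norm w) < m" "h * (norm w + norm v) < m"
    using h0 m by (simp_all add: add.commute)
  obtain q1 where q1: "dist q1 q \<le> h * (norm v + norm w)"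
    "f (q + h *\<^sub>R v + h *\<^sub>R w) - f (q + h *\<^sub>R v) - f (q + h *\<^sub>R w) + f q = h\<^sup>2 * fv q1 w"
    using second_difference_mean_value[OF r(2) h(1) _ d1 dv] h m by force
  obtain q2 where q2: "dist q2 q \<le> h * (norm w + norm v)"
    "f (q + h *\<^sub>R w + h *\<^sub>R v) - f (q + h *\<^sub>R w) - f (q + h *\<^sub>R v) + f q = h\<^sup>2 * fw q2 v"
    using second_difference_mean_value[OF r(2) h(1) _ d1 dw] h m by force
  have "q + h *\<^sub>R w + h *\<^sub>R v = q + h *\<^sub>R v + h *\<^sub>R w" by (simp add: algebra_simps)
  with q1(2) q2(2) h(1) have "fv q1 w = fw q2 v" by (simp add: algebra_simps)
  moreover have "dist (fv q1 w) (fv q w) < \<bar>fv q w - fw q v\<bar> / 2" using \<delta>v q1(1) h m by simp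
  moreover have "dist (fw q2 v) (fw q v) < \<bar>fv q w - fw q v\<bar> / 2" using \<delta>w q2(1) h m by simp
  ultimately show False by (auto simp: dist_real_def abs_if split: if_splits)
qed

lemma has_derivative_vec_componentwise:
  fixes f :: "'a::real_normed_vector \<Rightarrow> real^'n"
  assumes "\<And>i. ((\<lambda>x. f x $ i) has_derivative (\<lambda>h. f' h $ i)) (at a within S)"
  shows "(f has_derivative f') (at a within S)"
  using assms by (auto simp: has_derivative_componentwise_within[of f] Basis_vec_def inner_axis)

lemma has_derivative_unique_on_open:
  assumes "open S" "p \<in> S" "\<And>x. x \<in> S \<Longrightarrow> f x = g x"
    and "(f has_derivative f') (at p)" "(g has_derivative g') (at p)"
  shows "f' = g'"
  using has_derivative_transform_within_open[OF assms(4,1,2)] assms(3,5) has_derivative_unique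
  by metis

type_synonym phase_point = "((real^2) \<times> real) \<times> (real^2)"

definition grad_eta ::
    "(real^2 \<Rightarrow> real \<Rightarrow> real^2 \<Rightarrow> real) \<Rightarrow> phase_point list \<Rightarrow> phase_point \<Rightarrow> real^2"
  where "grad_eta \<phi> vs p = (\<chi> j. dderiv (vs @ [(0, axis j 1)]) (phiP \<phi>) p)"

lemma open_eta_nonzero: "open {p :: phase_point. snd p \<noteq> 0}"
  by (rule open_Collect_neq) (auto intro: continuous_intros)

lemma deriv_bounds_dderiv:
  assumes "deriv_bounds M \<epsilon>0 \<phi>" "vs \<in> lists Basis" "length vs \<le> M" "p \<in> region \<epsilon>0"
  shows "\<bar>dderiv vs (phiP \<phi>) p\<bar> \<le> 1"
  using assms unfolding deriv_bounds_def by (meson length_filter_le order_trans)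

lemma bounded_linear_xt_of: "bounded_linear xt_of"
proof -
  have "linear xt_of"
    by (rule linearI) (simp_all add: xt_of_def vec_eq_iff forall_2)
  then show ?thesis by (simp add: linear_conv_bounded_linear)
qed

lemma xt_of_axis_in_Basis: "(xt_of (axis k 1), 0 :: real^2) \<in> Basis"
proof -
  have "xt_of (axis 1 1) = (axis 1 1, 0)" "xt_of (axis 2 1) = (axis 2 1, 0)"
    "xt_of (axis 3 1) = (0, 1)"
    by (simp_all add: xt_of_def vec_eq_iff forall_2 axis_def)
  then have "xt_of (axis k 1) \<in> Basis"
    using exhaust_3[of k] by (auto simp: Basis_prod_def)
  then show ?thesis unfolding Basis_prod_def by (rule UnI1[OF imageI])
qed

lemma vector_matrix_mult_matrix_nth: "(w v* matrix f) $ k = w \<bullet> f (axis k 1)"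
  by (simp add: vector_matrix_mult_def matrix_def inner_vec_def mult.commute)

context
  fixes \<phi> :: "real^2 \<Rightarrow> real \<Rightarrow> real^2 \<Rightarrow> real"
  assumes smooth: "smooth_phase \<phi>"
begin

lemma dderiv_has_derivative:
  assumes "snd p \<noteq> 0"
  shows "(dderiv vs (phiP \<phi>) has_derivative (\<lambda>v. dderiv (v # vs) (phiP \<phi>) p)) (at p)"
proof -
  have "dderiv vs (phiP \<phi>) differentiable (at p)"
    using smooth assms unfolding smooth_phase_def by blast
  then show ?thesis by (simp add: dderiv.simps frechet_derivative_works)
qed

lemma dderiv_linear:
  assumes "snd p \<noteq> 0"
  shows "linear (\<lambda>v. dderiv (v # vs) (phiP \<phi>) p)"
  using dderiv_has_derivative[OF assms] has_derivative_linear by blast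

lemma dderiv_eta_direction:
  assumes "snd p \<noteq> 0"
  shows "dderiv ((0, v) # vs) (phiP \<phi>) p
    = v$1 * dderiv ((0, axis 1 1) # vs) (phiP \<phi>) p + v$2 * dderiv ((0, axis 2 1) # vs) (phiP \<phi>) p"
proof -
  have e: "((0::(real^2) \<times> real), v) = v$1 *\<^sub>R (0, axis 1 1) + v$2 *\<^sub>R (0, axis 2 1)"
    by (simp add: prod_eq_iff vec_eq_iff forall_2 axis_def)
  have lin: "linear (\<lambda>v. dderiv (v # vs) (phiP \<phi>) p)" by (rule dderiv_linear[OF assms])
  show ?thesis
    unfolding e by (simp only: linear_add[OF lin] linear_cmul[OF lin] real_scaleR_def)
qed

lemma dderiv_swap:
  assumes "snd p \<noteq> 0"
  shows "dderiv (v # w # vs) (phiP \<phi>) p = dderiv (w # v # vs) (phiP \<phi>) p"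
proof -
  have cont: "continuous (at p) (dderiv us (phiP \<phi>))" for us
    using smooth assms unfolding smooth_phase_def
    by (blast intro: differentiable_imp_continuous_within)
  show ?thesis
    by (rule second_derivative_symmetric[OF open_eta_nonzero, of p "dderiv vs (phiP \<phi>)"
          "\<lambda>p v. dderiv (v # vs) (phiP \<phi>) p" w "\<lambda>p v. dderiv (v # w # vs) (phiP \<phi>) p"
          v "\<lambda>p w. dderiv (w # v # vs) (phiP \<phi>) p"])
      (use assms dderiv_has_derivative cont in auto)
qed

lemma grad_eta_has_derivative:
  assumes "snd p \<noteq> 0"
  shows "(grad_eta \<phi> vs has_derivative (\<lambda>v. grad_eta \<phi> (v # vs) p)) (at p)"
  unfolding grad_eta_def
  by (rule has_derivative_vec_componentwise) (simp add: dderiv_has_derivative[OF assms])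

lemma grad_eta_linear:
  assumes "snd p \<noteq> 0"
  shows "linear (\<lambda>v. grad_eta \<phi> (v # vs) p)"
  using grad_eta_has_derivative[OF assms] has_derivative_linear by blast

lemma grad_eta_swap:
  assumes "snd p \<noteq> 0"
  shows "grad_eta \<phi> (v # w # vs) p = grad_eta \<phi> (w # v # vs) p"
  unfolding grad_eta_def using dderiv_swap[OF assms] by simp

lemma inner_grad_eta:
  assumes "snd p \<noteq> 0"
  shows "v \<bullet> grad_eta \<phi> [] p = dderiv [(0, v)] (phiP \<phi>) p"
  using dderiv_eta_direction[OF assms, of v "[]"] by (simp add: grad_eta_def inner_vec_def sum_2)

lemma inner_eta_grad_eta_has_derivative:
  assumes "snd p \<noteq> 0"
  shows "((\<lambda>p. snd p \<bullet> grad_eta \<phi> vs p) has_derivative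
      (\<lambda>d. snd d \<bullet> grad_eta \<phi> vs p + snd p \<bullet> grad_eta \<phi> (d # vs) p)) (at p)"
  by (auto intro!: derivative_eq_intros grad_eta_has_derivative[OF assms])

lemma u_eq_grad_eta:
  assumes "\<theta> \<noteq> 0"
  shows "u \<phi> \<theta> x t = grad_eta \<phi> [] ((x, t), \<theta>)"
proof -
  have "((\<lambda>\<eta>. ((x, t), \<eta>)) has_derivative (\<lambda>v. (0, v))) (at \<theta>)"
    by (auto intro!: derivative_eq_intros)
  from has_derivative_compose[OF this dderiv_has_derivative[of "((x, t), \<theta>)" "[]"]]
  have "(\<phi> x t has_derivative (\<lambda>v. dderiv [(0, v)] (phiP \<phi>) ((x, t), \<theta>))) (at \<theta>)"
    using assms by (simp add: phiP_def)
  from frechet_derivative_at[OF this, symmetric] show ?thesis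
    by (simp add: u_def grad_eta_def)
qed

lemma Fmap_has_derivative:
  assumes "\<theta> \<noteq> 0" "lam > 0"
  shows "(Fmap \<phi> lam \<theta> has_derivative (\<lambda>v. vector
      [grad_eta \<phi> [(xt_of v, 0)] ((1 / lam) *\<^sub>R xt_of y, \<theta>) $ 1,
       grad_eta \<phi> [(xt_of v, 0)] ((1 / lam) *\<^sub>R xt_of y, \<theta>) $ 2, v $ 3])) (at y)"
    (is "(_ has_derivative (\<lambda>v. vector [?G v $ 1, ?G v $ 2, v $ 3])) _")
proof -
  let ?q = "((1 / lam) *\<^sub>R xt_of y, \<theta>)"
  define U where "U y' = lam *\<^sub>R grad_eta \<phi> [] ((1 / lam) *\<^sub>R xt_of y', \<theta>)" for y'
  have "((\<lambda>y. ((1 / lam) *\<^sub>R xt_of y, \<theta>)) has_derivative (\<lambda>v. ((1 / lam) *\<^sub>R xt_of v, 0))) (at y)"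
    by (auto intro!: derivative_eq_intros bounded_linear.has_derivative[OF bounded_linear_xt_of])
  from has_derivative_compose[OF this grad_eta_has_derivative[of ?q "[]"]]
  have "(U has_derivative (\<lambda>v. lam *\<^sub>R grad_eta \<phi> [((1 / lam) *\<^sub>R xt_of v, 0)] ?q)) (at y)"
    unfolding U_def using assms by (auto intro: has_derivative_scaleR_right)
  moreover have "lam *\<^sub>R grad_eta \<phi> [((1 / lam) *\<^sub>R xt_of v, 0)] ?q = ?G v" for v
    using linear_cmul[OF grad_eta_linear[of ?q "[]"], of "1 / lam" "(xt_of v, 0)"] assms
    by simp
  ultimately have U: "(U has_derivative ?G) (at y)" by simp
  have F: "Fmap \<phi> lam \<theta> y' = vector [U y' $ 1, U y' $ 2, y' $ 3]" for y'
    using assms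
    by (simp add: Fmap_def u_lam_def U_def u_eq_grad_eta xt_of_def divide_inverse mult.commute)
  show ?thesis
  proof (rule has_derivative_vec_componentwise)
    fix i :: 3
    have "((\<lambda>y. U y $ j) has_derivative (\<lambda>v. ?G v $ j)) (at y)" for j
      by (rule bounded_linear.has_derivative[OF bounded_linear_vec_nth U])
    moreover have "((\<lambda>y. y $ 3) has_derivative (\<lambda>v. v $ 3)) (at y)"
      by (rule bounded_linear_imp_has_derivative[OF bounded_linear_vec_nth])
    ultimately show "((\<lambda>y. Fmap \<phi> lam \<theta> y $ i) has_derivative
        (\<lambda>v. vector [?G v $ 1, ?G v $ 2, v $ 3] $ i)) (at y)"
      using exhaust_3[of i] by (auto simp: F)
  qed
qed

lemma Jac_row_nth:
  assumes "\<theta> \<noteq> 0" "lam > 0"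
  shows "(w v* Jac \<phi> lam \<theta> y) $ k
    = fst (xt_of w) \<bullet> grad_eta \<phi> [(xt_of (axis k 1), 0)] ((1 / lam) *\<^sub>R xt_of y, \<theta>)
      + w $ 3 * axis k 1 $ 3"
  unfolding Jac_def vector_matrix_mult_matrix_nth
    frechet_derivative_at[OF Fmap_has_derivative[OF assms], symmetric]
  by (simp add: inner_vec_def sum_2 sum_3 xt_of_def)

lemma norm_grad_eta_le:
  assumes "deriv_bounds M \<epsilon>0 \<phi>" "3 \<le> M" "b \<in> Basis" "p \<in> region \<epsilon>0" "snd p \<noteq> 0"
  shows "norm (grad_eta \<phi> [(0, d), b] p) \<le> 4 * norm d"
proof -
  have entry: "\<bar>d$i * dderiv [(0, axis i 1), b, (0, axis j 1)] (phiP \<phi>) p\<bar> \<le> \<bar>d$i\<bar>" for i j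
  proof -
    have "\<bar>dderiv [(0, axis i 1), b, (0, axis j 1)] (phiP \<phi>) p\<bar> \<le> 1"
      by (rule deriv_bounds_dderiv[OF assms(1) _ _ assms(4)])
        (use assms(2,3) in \<open>auto simp: Basis_prod_def\<close>)
    then show ?thesis by (simp add: abs_mult mult_left_le)
  qed
  have component: "\<bar>grad_eta \<phi> [(0, d), b] p $ j\<bar> \<le> 2 * norm d" for j
  proof -
    have "\<bar>grad_eta \<phi> [(0, d), b] p $ j\<bar> \<le> \<bar>d$1\<bar> + \<bar>d$2\<bar>"
      using dderiv_eta_direction[OF assms(5), of d "[b, (0, axis j 1)]"] entry[of 1 j] entry[of 2 j]
      by (simp add: grad_eta_def)
    then show ?thesis
      using component_le_norm_cart[of d 1] component_le_norm_cart[of d 2] by simp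
  qed
  show ?thesis
    using norm_le_l1_cart[of "grad_eta \<phi> [(0, d), b] p"] component[of 1] component[of 2]
    by (simp add: sum_2)
qed

context
  assumes homog: "homog1 \<phi>"
begin

lemma phase_euler:
  assumes "snd p \<noteq> 0"
  shows "snd p \<bullet> grad_eta \<phi> [] p = phiP \<phi> p"
proof -
  obtain x \<eta> where p: "p = (x, \<eta>)" by (cases p)
  have scale: "phiP \<phi> (x, s *\<^sub>R \<eta>) = s * phiP \<phi> p" if "s > 0" for s
    using homog assms that unfolding homog1_def phiP_def p by simp
  have line: "(x, 0) + s *\<^sub>R (0, \<eta>) = (x, s *\<^sub>R \<eta>)" for s by simp
  have "(phiP \<phi> has_derivative (\<lambda>v. dderiv [v] (phiP \<phi>) p)) (at ((x, 0) + 1 *\<^sub>R (0, \<eta>)))"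
    using dderiv_has_derivative[OF assms, of "[]"] p by simp
  from has_real_derivative_along_line[OF this]
  have "((\<lambda>s. phiP \<phi> (x, s *\<^sub>R \<eta>)) has_real_derivative dderiv [(0, \<eta>)] (phiP \<phi>) p) (at 1)"
    unfolding line .
  then have "((\<lambda>s. s * phiP \<phi> p) has_real_derivative dderiv [(0, \<eta>)] (phiP \<phi>) p) (at 1)"
    by (rule has_field_derivative_transform_within_open[of _ _ _ "{0<..}"]) (auto simp: scale)
  moreover have "((\<lambda>s. s * phiP \<phi> p) has_real_derivative phiP \<phi> p) (at 1)"
    by (auto intro!: derivative_eq_intros)
  ultimately have "dderiv [(0, \<eta>)] (phiP \<phi>) p = phiP \<phi> p" by (rule DERIV_unique)
  then show ?thesis using inner_grad_eta[OF assms, of \<eta>] p by simp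
qed

text \<open>Differentiating Euler's identity along eta: the eta-gradient is homogeneous of degree 0.\<close>
lemma inner_eta_grad_eta_eta_direction:
  assumes "snd p \<noteq> 0"
  shows "snd p \<bullet> grad_eta \<phi> [(0, v)] p = 0"
proof -
  have "(\<lambda>d. snd d \<bullet> grad_eta \<phi> [] p + snd p \<bullet> grad_eta \<phi> [d] p) = (\<lambda>d. dderiv [d] (phiP \<phi>) p)"
    by (rule has_derivative_unique_on_open[OF open_eta_nonzero _ _
          inner_eta_grad_eta_has_derivative[OF assms], where g = "phiP \<phi>"])
      (use assms phase_euler dderiv_has_derivative[OF assms, of "[]"] in auto)
  from fun_cong[OF this, of "(0, v)"] show ?thesis
    using inner_grad_eta[OF assms, of v] by simp
qed

lemma inner_eta_grad_eta_mixed: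
  assumes "snd p \<noteq> 0" "snd b = 0"
  shows "snd p \<bullet> grad_eta \<phi> [(0, v), b] p = 0"
proof -
  have "(\<lambda>d. snd d \<bullet> grad_eta \<phi> [(0, v)] p + snd p \<bullet> grad_eta \<phi> [d, (0, v)] p) = (\<lambda>d. 0)"
    by (rule has_derivative_unique_on_open[OF open_eta_nonzero _ _
          inner_eta_grad_eta_has_derivative[OF assms(1)] has_derivative_const])
      (use assms inner_eta_grad_eta_eta_direction in auto)
  from fun_cong[OF this, of b] show ?thesis
    using assms grad_eta_swap by simp
qed

text \<open>Mean value theorem along the segment; at each point eta of it, eta annihilates the
  derivative (inner_eta_grad_eta_mixed), so c acts only through c - eta.\<close>
lemma grad_eta_increment_bound:
  assumes bounds: "deriv_bounds M \<epsilon>0 \<phi>" "3 \<le> M" and b: "b \<in> Basis" "snd b = 0"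
    and z: "z \<in> ball 0 \<epsilon>0" and seg: "closed_segment \<theta>1 \<theta>2 \<subseteq> ball e2 \<epsilon>0 - {0}"
    and c: "\<And>\<eta>. \<eta> \<in> closed_segment \<theta>1 \<theta>2 \<Longrightarrow> norm (c - \<eta>) \<le> \<rho>"
  shows "\<bar>c \<bullet> (grad_eta \<phi> [b] (z, \<theta>1) - grad_eta \<phi> [b] (z, \<theta>2))\<bar> \<le> 4 * \<rho> * norm (\<theta>1 - \<theta>2)"
proof -
  let ?S = "closed_segment \<theta>1 \<theta>2"
  have p: "(z, \<eta>) \<in> region \<epsilon>0" "snd (z, \<eta>) \<noteq> 0" if "\<eta> \<in> ?S" for \<eta>
    using seg that z by (auto simp: region_def)
  have "((\<lambda>\<eta>. c \<bullet> grad_eta \<phi> [b] (z, \<eta>)) has_derivative (\<lambda>d. c \<bullet> grad_eta \<phi> [(0, d), b] (z, \<eta>)))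
      (at \<eta> within ?S)" if "\<eta> \<in> ?S" for \<eta>
  proof -
    have "((\<lambda>\<eta>. (z, \<eta>)) has_derivative (\<lambda>d. (0, d))) (at \<eta> within ?S)"
      by (auto intro!: derivative_eq_intros)
    from has_derivative_compose[OF this grad_eta_has_derivative[OF p(2)[OF that]]]
    show ?thesis by (auto intro: has_derivative_inner_right simp: o_def)
  qed
  moreover have "onorm (\<lambda>d. c \<bullet> grad_eta \<phi> [(0, d), b] (z, \<eta>)) \<le> 4 * \<rho>" if "\<eta> \<in> ?S" for \<eta>
  proof (rule onorm_le)
    fix d
    have "c \<bullet> grad_eta \<phi> [(0, d), b] (z, \<eta>) = (c - \<eta>) \<bullet> grad_eta \<phi> [(0, d), b] (z, \<eta>)"
      using inner_eta_grad_eta_mixed[OF p(2)[OF that] b(2), of d] by (simp add: inner_diff_left)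
    then have "norm (c \<bullet> grad_eta \<phi> [(0, d), b] (z, \<eta>))
        \<le> norm (c - \<eta>) * norm (grad_eta \<phi> [(0, d), b] (z, \<eta>))"
      by (simp add: Cauchy_Schwarz_ineq2)
    also have "\<dots> \<le> \<rho> * (4 * norm d)"
      using c[OF that] norm_grad_eta_le[OF bounds b(1) p[OF that]]
      by (intro mult_mono) (auto intro: order_trans[OF norm_ge_zero])
    finally show "norm (c \<bullet> grad_eta \<phi> [(0, d), b] (z, \<eta>)) \<le> 4 * \<rho> * norm d" by simp
  qed
  ultimately have "norm (c \<bullet> grad_eta \<phi> [b] (z, \<theta>1) - c \<bullet> grad_eta \<phi> [b] (z, \<theta>2))
      \<le> 4 * \<rho> * norm (\<theta>1 - \<theta>2)"
    by (intro differentiable_bound[OF convex_closed_segment]) auto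
  then show ?thesis by (simp add: inner_diff_right)
qed

end

end

lemma arc_self: "norm \<theta> = 1 \<Longrightarrow> 0 \<le> a \<Longrightarrow> \<theta> \<in> arc \<theta> a"
  unfolding arc_def by (simp add: dot_square_norm)

text \<open>A chord is no longer than its arc: norm (v - c) = 2 sin (t / 2) \<le> t for t = arccos (v \<bullet> c).\<close>
lemma arc_subset_cball:
  assumes c: "norm c = 1"
  shows "arc c a \<subseteq> cball c (a / 2) \<inter> cball 0 1"
proof
  fix v assume v: "v \<in> arc c a"
  define t where "t = arccos (v \<bullet> c)"
  have "\<bar>v \<bullet> c\<bar> \<le> 1" using Cauchy_Schwarz_ineq2[of v c] v c by (simp add: arc_def)
  then have t: "cos t = v \<bullet> c" "0 \<le> t" "t \<le> a / 2"
    using v arccos_bounded[of "v \<bullet> c"] by (auto simp: t_def arc_def)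
  have unit: "v \<bullet> v = 1" "c \<bullet> c = 1" using v c by (simp_all add: arc_def dot_square_norm)
  have "(norm (v - c))\<^sup>2 = 2 - 2 * (v \<bullet> c)"
    by (simp add: power2_norm_eq_inner inner_diff_left inner_diff_right inner_commute unit)
  also have "\<dots> = 4 * (sin (t / 2))\<^sup>2" using cos_double_sin[of "t / 2"] t(1) by simp
  also have "\<dots> \<le> 4 * (t / 2)\<^sup>2"
    using power_mono[OF abs_sin_x_le_abs_x abs_ge_zero, of "t / 2" 2] t(2) by simp
  also have "\<dots> = t\<^sup>2" by (simp add: power2_eq_square)
  finally have "norm (v - c) \<le> t" using t(2) by (rule power2_le_imp_le)
  then show "v \<in> cball c (a / 2) \<inter> cball 0 1"
    using t(3) v by (simp add: arc_def dist_norm norm_minus_commute)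
qed

lemma closed_segment_in_arc:
  assumes "norm \<tau> = 1" "A < 2" "\<theta>1 \<in> arc \<tau> A" "\<theta>2 \<in> arc \<tau> A" "arc \<tau> A \<subseteq> S" "convex S"
  shows "closed_segment \<theta>1 \<theta>2 \<subseteq> S \<inter> cball \<tau> (A / 2) \<inter> cball 0 1 - {0}"
proof -
  have "closed_segment \<theta>1 \<theta>2 \<subseteq> S \<inter> cball \<tau> (A / 2) \<inter> cball 0 1"
    using assms arc_subset_cball[of \<tau> A]
    by (intro closed_segment_subset convex_Int convex_cball) auto
  moreover have "0 \<notin> cball \<tau> (A / 2)" using assms by simp
  ultimately show ?thesis by blast
qed

lemma arc_diameter_le:
  assumes "norm \<tau> = 1" "\<theta>1 \<in> arc \<tau> A" "\<theta>2 \<in> arc \<tau> A"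
  shows "norm (\<theta>1 - \<theta>2) \<le> A"
proof -
  have "\<theta>1 \<in> cball \<tau> (A / 2)" "\<theta>2 \<in> cball \<tau> (A / 2)"
    using assms arc_subset_cball[of \<tau> A] by blast+
  then show ?thesis
    using dist_triangle[of \<theta>1 \<theta>2 \<tau>] by (simp add: dist_norm norm_minus_commute)
qed

lemma norm_perp [simp]: "norm (perp v) = norm v"
  by (simp add: perp_def norm_eq_sqrt_inner inner_vec_def sum_2 add.commute)

lemma Theta_fst_xt_of:
  assumes "w \<in> Theta R \<sigma> \<tau>"
  obtains a b where "fst (xt_of w) = a *\<^sub>R \<tau> + b *\<^sub>R perp \<tau>"
    "\<bar>a\<bar> \<le> \<sigma>\<^sup>2 / 2" "\<bar>b\<bar> \<le> \<sigma> * R powr (-1/2) / 2"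
  using assms unfolding Theta_def by (auto simp: xt_of_def vec_eq_iff forall_2)

lemma Theta_weights_combination_le:
  fixes a b X Y \<sigma> A \<rho> R :: real
  assumes a: "\<bar>a\<bar> \<le> \<sigma>\<^sup>2 / 2" and b: "\<bar>b\<bar> \<le> \<sigma> * \<rho> / 2"
    and X: "\<bar>X\<bar> \<le> 2 * A\<^sup>2" and Y: "\<bar>Y\<bar> \<le> 8 * A"
    and \<sigma>A: "\<sigma> * A = \<rho>" and \<rho>: "\<rho>\<^sup>2 = 1 / R"
  shows "\<bar>a * X + b * Y\<bar> \<le> 5 / R"
proof -
  have "\<bar>a * X\<bar> \<le> \<sigma>\<^sup>2 / 2 * (2 * A\<^sup>2)"
    unfolding abs_mult by (rule mult_mono[OF a X]) auto
  also have "\<dots> = 1 / R" using \<sigma>A \<rho> by (simp add: power_mult_distrib[symmetric])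
  finally have aX: "\<bar>a * X\<bar> \<le> 1 / R" .
  have "\<bar>b * Y\<bar> \<le> \<sigma> * \<rho> / 2 * (8 * A)"
    unfolding abs_mult by (rule mult_mono[OF b Y]) (use b in auto)
  also have "\<dots> = 4 / R" using \<sigma>A \<rho> by (simp add: power2_eq_square mult.assoc mult.left_commute)
  finally have bY: "\<bar>b * Y\<bar> \<le> 4 / R" .
  show ?thesis
    using abs_triangle_ineq[of "a * X" "b * Y"] aX bY by simp
qed

lemma arc_grad_eta_difference_le:
  assumes smooth: "smooth_phase \<phi>" and homog: "homog1 \<phi>" and bounds: "deriv_bounds 3 \<epsilon>0 \<phi>"
    and \<tau>: "norm \<tau> = 1" "arc \<tau> A \<subseteq> ball e2 \<epsilon>0" and A: "0 \<le> A" "A \<le> 1"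
    and \<theta>: "\<theta>1 \<in> arc \<tau> A" "\<theta>2 \<in> arc \<tau> A"
    and z: "z \<in> ball 0 \<epsilon>0" and b: "b \<in> Basis" "snd b = 0"
  shows "\<bar>\<tau> \<bullet> (grad_eta \<phi> [b] (z, \<theta>1) - grad_eta \<phi> [b] (z, \<theta>2))\<bar> \<le> 2 * A\<^sup>2"
    and "\<bar>perp \<tau> \<bullet> (grad_eta \<phi> [b] (z, \<theta>1) - grad_eta \<phi> [b] (z, \<theta>2))\<bar> \<le> 8 * A"
proof -
  have seg: "closed_segment \<theta>1 \<theta>2 \<subseteq> ball e2 \<epsilon>0 \<inter> cball \<tau> (A / 2) \<inter> cball 0 1 - {0}"
    using A by (intro closed_segment_in_arc[OF \<tau>(1) _ \<theta> \<tau>(2) convex_ball]) simp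
  then have "closed_segment \<theta>1 \<theta>2 \<subseteq> ball e2 \<epsilon>0 - {0}" by blast
  note increment = grad_eta_increment_bound[OF smooth homog bounds order_refl b z this]
  have diam: "norm (\<theta>1 - \<theta>2) \<le> A" by (rule arc_diameter_le[OF \<tau>(1) \<theta>])
  have "norm (\<tau> - \<eta>) \<le> A / 2" if "\<eta> \<in> closed_segment \<theta>1 \<theta>2" for \<eta>
    using seg that by (auto simp: dist_norm)
  then have "\<bar>\<tau> \<bullet> (grad_eta \<phi> [b] (z, \<theta>1) - grad_eta \<phi> [b] (z, \<theta>2))\<bar> \<le> 4 * (A / 2) * norm (\<theta>1 - \<theta>2)"
    by (rule increment)
  also have "\<dots> \<le> 2 * A\<^sup>2"
    using mult_left_mono[OF diam, of "2 * A"] A(1) by (simp add: power2_eq_square)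
  finally show "\<bar>\<tau> \<bullet> (grad_eta \<phi> [b] (z, \<theta>1) - grad_eta \<phi> [b] (z, \<theta>2))\<bar> \<le> 2 * A\<^sup>2" .
  have "norm (perp \<tau> - \<eta>) \<le> 2" if "\<eta> \<in> closed_segment \<theta>1 \<theta>2" for \<eta>
  proof -
    have "norm \<eta> \<le> 1" using seg that by auto
    then show ?thesis using norm_triangle_ineq4[of "perp \<tau>" \<eta>] \<tau>(1) by simp
  qed
  then have "\<bar>perp \<tau> \<bullet> (grad_eta \<phi> [b] (z, \<theta>1) - grad_eta \<phi> [b] (z, \<theta>2))\<bar> \<le> 4 * 2 * norm (\<theta>1 - \<theta>2)"
    by (rule increment)
  also have "\<dots> \<le> 8 * A" using diam by simp
  finally show "\<bar>perp \<tau> \<bullet> (grad_eta \<phi> [b] (z, \<theta>1) - grad_eta \<phi> [b] (z, \<theta>2))\<bar> \<le> 8 * A" .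
qed

lemma inner_Theta_grad_eta_difference_le:
  assumes smooth: "smooth_phase \<phi>" and homog: "homog1 \<phi>" and bounds: "deriv_bounds 3 \<epsilon>0 \<phi>"
    and R: "1 \<le> R" "R powr (-1/2) \<le> \<sigma>"
    and \<tau>: "norm \<tau> = 1" "arc \<tau> (inverse \<sigma> * R powr (-1/2)) \<subseteq> ball e2 \<epsilon>0"
    and \<theta>1: "norm \<theta>1 = 1" "arc \<theta>1 (R powr (-1/2)) \<subseteq> arc \<tau> (inverse \<sigma> * R powr (-1/2))"
    and \<theta>2: "norm \<theta>2 = 1" "arc \<theta>2 (R powr (-1/2)) \<subseteq> arc \<tau> (inverse \<sigma> * R powr (-1/2))"
    and z: "z \<in> ball 0 \<epsilon>0" and w: "w \<in> Theta R \<sigma> \<tau>" and b: "b \<in> Basis" "snd b = 0"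
  shows "\<bar>fst (xt_of w) \<bullet> (grad_eta \<phi> [b] (z, \<theta>1) - grad_eta \<phi> [b] (z, \<theta>2))\<bar> \<le> 5 / R"
proof -
  define \<rho> where "\<rho> = R powr (-1/2)"
  define A where "A = inverse \<sigma> * \<rho>"
  have arcs: "arc \<tau> A \<subseteq> ball e2 \<epsilon>0" "arc \<theta>1 \<rho> \<subseteq> arc \<tau> A" "arc \<theta>2 \<rho> \<subseteq> arc \<tau> A"
    using \<tau>(2) \<theta>1(2) \<theta>2(2) by (simp_all add: A_def \<rho>_def)
  have \<rho>: "\<rho> > 0" "\<rho>\<^sup>2 = 1 / R"
    using R(1) powr_add[of R "-1/2" "-1/2", symmetric]
    by (simp_all add: \<rho>_def power2_eq_square powr_minus_divide)
  have \<sigma>: "\<sigma> > 0" using R(2) \<rho>(1) unfolding \<rho>_def by linarith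
  have A: "0 \<le> A" "A \<le> 1" "\<sigma> * A = \<rho>"
    using R(2) \<rho>(1) \<sigma> by (simp_all add: A_def \<rho>_def field_simps)
  have \<theta>: "\<theta>1 \<in> arc \<tau> A" "\<theta>2 \<in> arc \<tau> A"
    using arcs(2,3) arc_self[OF \<theta>1(1), of \<rho>] arc_self[OF \<theta>2(1), of \<rho>] \<rho>(1) by auto
  note XY = arc_grad_eta_difference_le[OF smooth homog bounds \<tau>(1) arcs(1) A(1,2) \<theta> z b]
  obtain a c where "fst (xt_of w) = a *\<^sub>R \<tau> + c *\<^sub>R perp \<tau>"
    and ac: "\<bar>a\<bar> \<le> \<sigma>\<^sup>2 / 2" "\<bar>c\<bar> \<le> \<sigma> * \<rho> / 2"
    using Theta_fst_xt_of[OF w] unfolding \<rho>_def .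
  then show ?thesis
    using Theta_weights_combination_le[OF ac XY A(3) \<rho>(2)] by (simp add: inner_add_left)
qed

theorem lemma4p1:
  shows "\<exists>(M::nat) (C::real). \<forall>\<epsilon>0 \<phi> R lam \<sigma> \<tau> y w \<theta>1 \<theta>2.
     \<epsilon>0 > 0 \<and> smooth_phase \<phi> \<and> homog1 \<phi> \<and> rank_condition \<epsilon>0 \<phi> \<and> deriv_bounds M \<epsilon>0 \<phi>
     \<and> 1 \<le> R \<and> R \<le> lam
     \<and> dyadic \<sigma> \<and> R powr (-1/2) \<le> \<sigma> \<and> \<sigma> \<le> 1
     \<and> norm \<tau> = 1 \<and> arc \<tau> (inverse \<sigma> * R powr (-1/2)) \<subseteq> ball e2 \<epsilon>0
     \<and> norm \<theta>1 = 1 \<and> arc \<theta>1 (R powr (-1/2)) \<subseteq> arc \<tau> (inverse \<sigma> * R powr (-1/2))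
     \<and> norm \<theta>2 = 1 \<and> arc \<theta>2 (R powr (-1/2)) \<subseteq> arc \<tau> (inverse \<sigma> * R powr (-1/2))
     \<and> (1 / lam) *\<^sub>R xt_of y \<in> ball 0 \<epsilon>0
     \<and> w \<in> Theta R \<sigma> \<tau>
     \<longrightarrow> norm (w v* Jac \<phi> lam \<theta>1 y - w v* Jac \<phi> lam \<theta>2 y) \<le> C / R"
proof (intro exI[of _ "3::nat"] exI[of _ "15::real"] allI impI, elim conjE)
  fix \<epsilon>0 \<phi> R lam \<sigma> \<tau> y w \<theta>1 \<theta>2
  assume smooth: "smooth_phase \<phi>" and R: "1 \<le> R" "R \<le> lam"
    and \<theta>: "norm \<theta>1 = 1" "norm \<theta>2 = 1"
    and hyps: "homog1 \<phi>" "deriv_bounds 3 \<epsilon>0 \<phi>" "R powr (-1/2) \<le> \<sigma>"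
      "norm \<tau> = 1" "arc \<tau> (inverse \<sigma> * R powr (-1/2)) \<subseteq> ball e2 \<epsilon>0"
      "arc \<theta>1 (R powr (-1/2)) \<subseteq> arc \<tau> (inverse \<sigma> * R powr (-1/2))"
      "arc \<theta>2 (R powr (-1/2)) \<subseteq> arc \<tau> (inverse \<sigma> * R powr (-1/2))"
      "(1 / lam) *\<^sub>R xt_of y \<in> ball 0 \<epsilon>0" "w \<in> Theta R \<sigma> \<tau>"
  have nonzero: "\<theta>1 \<noteq> 0" "\<theta>2 \<noteq> 0" "lam > 0" using \<theta> R by auto
  have component: "\<bar>(w v* Jac \<phi> lam \<theta>1 y - w v* Jac \<phi> lam \<theta>2 y) $ k\<bar> \<le> 5 / R" for k
    using Jac_row_nth[OF smooth nonzero(1,3)] Jac_row_nth[OF smooth nonzero(2,3)]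
      inner_Theta_grad_eta_difference_le[OF smooth hyps(1,2) R(1) hyps(3-5) \<theta>(1) hyps(6)
        \<theta>(2) hyps(7-9) xt_of_axis_in_Basis snd_conv]
    by (auto simp: inner_diff_right)
  have "norm (w v* Jac \<phi> lam \<theta>1 y - w v* Jac \<phi> lam \<theta>2 y)
      \<le> (\<Sum>k\<in>UNIV. \<bar>(w v* Jac \<phi> lam \<theta>1 y - w v* Jac \<phi> lam \<theta>2 y) $ k\<bar>)"
    by (rule norm_le_l1_cart)
  also have "\<dots> \<le> (\<Sum>k\<in>(UNIV :: 3 set). 5 / R)" by (rule sum_mono) (rule component)
  finally show "norm (w v* Jac \<phi> lam \<theta>1 y - w v* Jac \<phi> lam \<theta>2 y) \<le> 15 / R" by simp
qed

end
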